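(* Let $\Pi=\{321,312,123,231\}$ (consecutive patterns). For $k\ge 1$, $$I_{2k+1}(\Pi;q)=2\,q^k C_k(q),\qquad I_{2k}(\Pi;q)=q^{k-1}C_{k-1}(q)+q^kC_k(q).$$
   Context: For $\sigma\in S_3$ and $\pi=\pi_1\cdots\pi_n\in S_n$, $\pi$ contains the consecutive pattern $\sigma$ if there is an index $i$ with $1\le i\le n-2$ such that $\pi_i\pi_{i+1}\pi_{i+2}$ is order-isomorphic to $\sigma$; otherwise $\pi$ avoids $\sigma$. $\mathrm{Av}_n(\Pi)$ is the set of $\pi\in S_n$ avoiding every pattern in $\Pi$. $\mathrm{inv}(\pi)=\#\{(i,j):i<j,\ \pi_i>\pi_j\}$ and $I_n(\Pi;q)=\sum_{\pi\in\mathrm{Av}_n(\Pi)}q^{\mathrm{inv}(\pi)}$. A Dyck path of length $k$ is a lattice path from $(0,0)$ to $(k,k)$ with unit steps $(1,0)$ and $(0,1)$ containing no point $(x,y)$ with $x>y$; its area is the number of unit squares lying below the path and completely above the diagonal. $C_k(q)=\sum_P q^{\mathrm{area}(P)}$ over Dyck paths $P$ of length $k$ (so $C_0(q)=1$). *)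

theory Defs
  imports Main
begin

definition perms :: "nat \<Rightarrow> nat list set" where
  "perms n = {p. distinct p \<and> set p = {1..n}}"

definition order_iso :: "nat list \<Rightarrow> nat list \<Rightarrow> bool" where
  "order_iso xs ys \<longleftrightarrow> length xs = length ys \<and>
     (\<forall>i<length xs. \<forall>j<length xs. (xs ! i < xs ! j) = (ys ! i < ys ! j))"

definition contains_cons :: "nat list \<Rightarrow> nat list \<Rightarrow> bool" where
  "contains_cons p \<sigma> \<longleftrightarrow>
     (\<exists>i. i + 2 < length p \<and> order_iso [p ! i, p ! (i+1), p ! (i+2)] \<sigma>)"

definition Av :: "nat \<Rightarrow> nat list set \<Rightarrow> nat list set" where
  "Av n Pi = {p \<in> perms n. \<forall>\<sigma>\<in>Pi. \<not> contains_cons p \<sigma>}"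

definition inv :: "nat list \<Rightarrow> nat" where
  "inv p = card {(i, j). i < j \<and> j < length p \<and> p ! i > p ! j}"

definition I_poly :: "nat \<Rightarrow> nat list set \<Rightarrow> 'a::comm_ring_1 \<Rightarrow> 'a" where
  "I_poly n Pi q = (\<Sum>p\<in>Av n Pi. q ^ inv p)"

text \<open>Lattice paths: False = east step (1,0), True = north step (0,1).
  The endpoint of a path is (number of east steps, number of north steps).\<close>
definition endpt :: "bool list \<Rightarrow> nat \<times> nat" where
  "endpt P = (count_list P False, count_list P True)"

definition dyck :: "nat \<Rightarrow> bool list \<Rightarrow> bool" where
  "dyck k P \<longleftrightarrow> length P = 2 * k \<and> endpt P = (k, k) \<and>
     (\<forall>m\<le>length P. fst (endpt (take m P)) \<le> snd (endpt (take m P)))"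

text \<open>Unit square with lower-left corner (i,j). It lies below the path iff the
  east step of the path over column i is at height > j; it lies completely above
  the diagonal iff j \<ge> i + 1.\<close>
definition area :: "bool list \<Rightarrow> nat" where
  "area P = card {(i, j). j \<ge> i + 1 \<and>
      (\<exists>m<length P. P ! m = False \<and> fst (endpt (take m P)) = i
                    \<and> j < snd (endpt (take m P)))}"

definition Cq :: "nat \<Rightarrow> 'a::comm_ring_1 \<Rightarrow> 'a" where
  "Cq k q = (\<Sum>P\<in>{P. dyck k P}. q ^ area P)"

end

theory Submission
  imports Defs
begin

(* A permutation avoids the four patterns iff every consecutive triple is order
   isomorphic to 132 or 213; equivalently pi_i < pi_(i+2) everywhere and the
   middle entry of each triple is never between its two neighbours.  The first
   condition says that the entries at even and at odd positions both increase,
   so such a permutation is determined by the word w in {False, True}^n whose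
   t-th letter records whether the value t+1 sits at an odd position.  The
   value t+1 then occupies the "slot" 2r or 2r+1, r being the number of
   equal letters before it.

   Reading False as an
   east step and True as a north step, word_inv is computed letter by letter
   and compared with the area statistic of Dyck paths.  Finally the good words
   of length 2k+1 (resp. 2k) are classified as Dyck paths of length k, either
   followed by an east step or mirrored (resp. Dyck paths of length k and
   mirrored Dyck paths of length k-1 followed by a north step), which yields
   the two identities of the theorem. *)

definition pcount :: "bool list \<Rightarrow> nat \<Rightarrow> bool \<Rightarrow> nat" where
  "pcount w t c = count_list (take t w) c"

lemma pcount_0 [simp]: "pcount w 0 c = 0"
  by (simp add: pcount_def)

lemma pcount_Suc:
  "pcount w (Suc t) c = pcount w t c + (if t < length w \<and> w!t = c then 1 else 0)"
  unfolding pcount_def by (cases "t < length w") (auto simp: take_Suc_conv_app_nth)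

lemma pcount_full [simp]: "pcount w (length w) c = count_list w c"
  by (simp add: pcount_def)

lemma pcount_snoc: "s \<le> length w \<Longrightarrow> pcount (w @ [c]) s d = pcount w s d"
  by (simp add: pcount_def)

lemma pcount_Cons_Suc: "pcount (x # v) (Suc m) c = pcount v m c + (if x = c then 1 else 0)"
  by (simp add: pcount_def)

lemma count_map_Not: "count_list (map Not v) c = count_list v (\<not> c)"
  by (induction v) auto

lemma pcount_map_Not: "pcount (map Not v) m c = pcount v m (\<not> c)"
  by (simp add: pcount_def take_map count_map_Not)

lemma count_True_False: "count_list w True + count_list w False = length w"
  by (induction w) auto

lemma pcount_True_False: "pcount w t True + pcount w t False = min t (length w)"
  by (induction t) (auto simp: pcount_Suc)

lemma pcount_mono: "m \<le> m' \<Longrightarrow> pcount w m c \<le> pcount w m' c"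
  by (induction m') (auto simp: pcount_Suc le_Suc_eq)

lemma pcount_strict: "s < t \<Longrightarrow> s < length w \<Longrightarrow> w!s = c \<Longrightarrow> pcount w s c < pcount w t c"
  using pcount_mono[of "Suc s" t w c] by (simp add: pcount_Suc)

lemma pcount_less_iff:
  "s < length w \<Longrightarrow> t < length w \<Longrightarrow> w!s = c \<Longrightarrow> s < t \<longleftrightarrow> pcount w s c < pcount w t c"
  by (metis pcount_mono pcount_strict leD linorder_not_less)

lemma pcount_le_total: "pcount w t c \<le> count_list w c"
  by (metis append_take_drop_id count_list_append le_add1 pcount_def)

lemma pcount_lt_total: "t < length w \<Longrightarrow> w!t = c \<Longrightarrow> pcount w t c < count_list w c"
  using pcount_strict[of t "length w" w c] by simp

lemma pcount_card: "pcount w t c = card {s. s < t \<and> s < length w \<and> w!s = c}"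
proof (induction t)
  case (Suc t)
  have "{s. s < Suc t \<and> s < length w \<and> w!s = c}
      = {s. s < t \<and> s < length w \<and> w!s = c} \<union> (if t < length w \<and> w!t = c then {t} else {})"
    by (auto simp: less_Suc_eq)
  then show ?case using Suc by (simp add: pcount_Suc)
qed simp

lemma card_parity_below: "card {j. j < n \<and> odd j = b} = (if b then n div 2 else (n + 1) div 2)"
proof (induction n)
  case (Suc n)
  have fin: "finite {j. j < n \<and> odd j = b}" by simp
  show ?case
  proof (cases "odd n = b")
    case True
    then have "{j. j < Suc n \<and> odd j = b} = insert n {j. j < n \<and> odd j = b}"
      by (auto simp: less_Suc_eq)
    then have "card {j. j < Suc n \<and> odd j = b} = Suc (card {j. j < n \<and> odd j = b})"
      using fin by simp
    then show ?thesis using Suc True by (cases b; cases "even n") (auto elim!: oddE evenE)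
  next
    case False
    then have "{j. j < Suc n \<and> odd j = b} = {j. j < n \<and> odd j = b}"
      by (auto simp: less_Suc_eq)
    then show ?thesis using Suc False by (cases b; cases "even n") (auto elim!: oddE evenE)
  qed
qed simp

lemma card_same_parity_below: "card {j. j < i \<and> odd j = odd i} = i div 2"
  using card_parity_below[of i "odd i"] by (auto elim: evenE)

definition slot :: "bool list \<Rightarrow> nat \<Rightarrow> nat" where
  "slot w t = (if w!t then 2 * pcount w t True + 1 else 2 * pcount w t False)"

text \<open>Words with as many even as odd slots available, i.e. ceil(n/2) letters False
  and floor(n/2) letters True.\<close>
definition balanced :: "bool list \<Rightarrow> bool" where
  "balanced w \<longleftrightarrow> count_list w True \<le> count_list w False \<and> count_list w False \<le> count_list w True + 1"

lemma slot_even: "slot w s = 2 * r \<Longrightarrow> \<not> w!s \<and> pcount w s False = r"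
  unfolding slot_def by (cases "w!s") presburger+

lemma slot_odd: "slot w s = 2 * r + 1 \<Longrightarrow> w!s \<and> pcount w s True = r"
  unfolding slot_def by (cases "w!s") presburger+

lemma slot_snoc: "s < length w \<Longrightarrow> slot (w @ [c]) s = slot w s"
  by (simp add: slot_def pcount_snoc nth_append)

lemma slot_snoc_last:
  "slot (w @ [c]) (length w) = (if c then 2 * count_list w True + 1 else 2 * count_list w False)"
  by (simp add: slot_def pcount_snoc)

lemma slot_lt: "balanced w \<Longrightarrow> t < length w \<Longrightarrow> slot w t < length w"
  using pcount_lt_total[of t w "w!t"] count_True_False[of w]
  by (cases "w!t") (auto simp: slot_def balanced_def)

lemma slot_inj: "inj_on (slot w) {..<length w}"
proof (rule inj_onI)
  fix s t assume s: "s \<in> {..<length w}" and t: "t \<in> {..<length w}" and eq: "slot w s = slot w t"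
  then have same: "w!s = w!t"
    by (cases "w!s"; cases "w!t") (auto simp: slot_def, presburger+)
  with eq have "pcount w s (w!s) = pcount w t (w!s)"
    by (cases "w!s") (auto simp: slot_def)
  with s t same show "s = t"
    using pcount_less_iff[of s w t "w!s"] pcount_less_iff[of t w s "w!s"] by (auto simp: linorder_neq_iff)
qed

lemma slot_bij: "balanced w \<Longrightarrow> bij_betw (slot w) {..<length w} {..<length w}"
  by (rule bij_betw_imageI[OF slot_inj]) (rule endo_inj_surj, auto intro: slot_lt slot_inj)

definition perm_of :: "nat \<Rightarrow> (nat \<Rightarrow> nat) \<Rightarrow> nat list" where
  "perm_of n f = map (\<lambda>i. Suc (inv_into {..<n} f i)) [0..<n]"

lemma perm_of_length [simp]: "length (perm_of n f) = n"
  by (simp add: perm_of_def)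

lemma perm_of_nth: "i < n \<Longrightarrow> perm_of n f ! i = Suc (inv_into {..<n} f i)"
  by (simp add: perm_of_def)

lemma perms_length: "p \<in> perms n \<Longrightarrow> length p = n"
  using distinct_card[of p] by (simp add: perms_def)

context
  fixes n :: nat and f :: "nat \<Rightarrow> nat"
  assumes bij: "bij_betw f {..<n} {..<n}"
begin

lemma perm_of_inv_lt: "i < n \<Longrightarrow> inv_into {..<n} f i < n"
  using bij by (metis bij_betw_def inv_into_into lessThan_iff)

lemma perm_of_f_inv: "i < n \<Longrightarrow> f (inv_into {..<n} f i) = i"
  using bij by (metis bij_betw_def f_inv_into_f lessThan_iff)

lemma perm_of_at: "t < n \<Longrightarrow> perm_of n f ! f t = Suc t"
proof -
  assume t: "t < n"
  then have "f t < n" using bij by (auto dest: bij_betwE)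
  moreover have "inv_into {..<n} f (f t) = t" using bij t by (auto simp: bij_betw_def inv_into_f_f)
  ultimately show ?thesis by (simp add: perm_of_nth)
qed

lemma perm_of_perms: "perm_of n f \<in> perms n"
proof -
  have d: "distinct (perm_of n f)"
  proof (rule distinct_conv_nth[THEN iffD2], intro allI impI)
    fix i j assume "i < length (perm_of n f)" "j < length (perm_of n f)" "i \<noteq> j"
    then show "perm_of n f ! i \<noteq> perm_of n f ! j"
      using perm_of_f_inv[of i] perm_of_f_inv[of j] by (simp add: perm_of_nth) metis
  qed
  have "set (perm_of n f) = {1..n}"
  proof
    show "set (perm_of n f) \<subseteq> {1..n}"
      using perm_of_inv_lt by (force simp: in_set_conv_nth perm_of_nth)
  next
    show "{1..n} \<subseteq> set (perm_of n f)"
    proof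
      fix v assume v: "v \<in> {1..n}"
      then obtain t where t: "v = Suc t" "t < n" by (cases v) auto
      have "f t < n" using bij t by (auto dest: bij_betwE)
      then show "v \<in> set (perm_of n f)" using perm_of_at[OF t(2)] t
        by (metis in_set_conv_nth perm_of_length)
    qed
  qed
  with d show ?thesis by (simp add: perms_def)
qed

lemma perm_of_inv: "Defs.inv (perm_of n f) = card {(s,t). s < t \<and> t < n \<and> f t < f s}"
proof -
  let ?p = "perm_of n f"
  let ?T = "{(s,t). s < t \<and> t < n \<and> f t < f s}"
  let ?I = "{(i, j). i < j \<and> j < length ?p \<and> ?p ! i > ?p ! j}"
  have inj: "inj_on f {..<n}" using bij by (simp add: bij_betw_def)
  have img: "(\<lambda>(s,t). (f t, f s)) ` ?T = ?I"
  proof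
    show "(\<lambda>(s,t). (f t, f s)) ` ?T \<subseteq> ?I"
    proof
      fix x assume "x \<in> (\<lambda>(s,t). (f t, f s)) ` ?T"
      then obtain s t where x: "x = (f t, f s)" "s < t" "t < n" "f t < f s" by auto
      have "f s < n" using bij x by (auto dest: bij_betwE)
      then show "x \<in> ?I" using x perm_of_at[of s] perm_of_at[of t] by auto
    qed
  next
    show "?I \<subseteq> (\<lambda>(s,t). (f t, f s)) ` ?T"
    proof
      fix x assume "x \<in> ?I"
      then obtain i j where x: "x = (i,j)" "i < j" "j < n" "?p ! i > ?p ! j" by auto
      define s where "s = inv_into {..<n} f j"
      define t where "t = inv_into {..<n} f i"
      have st: "s < n" "t < n" "f s = j" "f t = i"
        using x perm_of_inv_lt perm_of_f_inv s_def t_def by auto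
      have "s < t" using x(4) x(2,3) by (simp add: perm_of_nth s_def t_def)
      then show "x \<in> (\<lambda>(s,t). (f t, f s)) ` ?T" using st x
        by (auto intro!: image_eqI[where x="(s,t)"])
    qed
  qed
  have inj2: "inj_on (\<lambda>(s,t). (f t, f s)) ?T"
    using inj by (auto simp: inj_on_def)
  have "card ?I = card ?T" using card_image[OF inj2] img by simp
  then show ?thesis unfolding Defs.inv_def by simp
qed

end

definition word_perm :: "bool list \<Rightarrow> nat list" where
  "word_perm w = perm_of (length w) (slot w)"

definition word_inv :: "bool list \<Rightarrow> nat" where
  "word_inv w = card {(s,t). s < t \<and> t < length w \<and> slot w t < slot w s}"

lemma inv_word_perm: "balanced w \<Longrightarrow> Defs.inv (word_perm w) = word_inv w"
  unfolding word_perm_def word_inv_def using perm_of_inv[OF slot_bij] by simp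

lemma word_perm_inj:
  assumes "balanced w" "balanced w'" "length w = length w'" "word_perm w = word_perm w'"
  shows "w = w'"
proof (rule nth_equalityI)
  fix t assume t: "t < length w"
  let ?n = "length w"
  have b1: "bij_betw (slot w) {..<?n} {..<?n}" using assms(1) by (rule slot_bij)
  have b2: "bij_betw (slot w') {..<?n} {..<?n}" using assms(2,3) slot_bij by metis
  have "word_perm w ! slot w t = word_perm w ! slot w' t"
    using perm_of_at[OF b1 t] perm_of_at[OF b2 t] assms(3,4) by (simp add: word_perm_def)
  moreover have "distinct (word_perm w)"
    using perm_of_perms[OF b1] by (simp add: word_perm_def perms_def)
  ultimately have "slot w t = slot w' t"
    using nth_eq_iff_index_eq slot_lt[OF assms(1) t] slot_lt[OF assms(2)] t assms(3)
    by (metis word_perm_def perm_of_length)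
  then show "w!t = w'!t" unfolding slot_def by (cases "w!t"; cases "w'!t") presburger+
qed (fact assms(3))

abbreviation Pat :: "nat list set" where
  "Pat \<equiv> {[3,2,1],[3,1,2],[1,2,3],[2,3,1]}"

text \<open>The two consecutive patterns left over, 132 and 213.\<close>
definition allowed3 :: "nat \<Rightarrow> nat \<Rightarrow> nat \<Rightarrow> bool" where
  "allowed3 x y z \<longleftrightarrow> (x < z \<and> z < y) \<or> (y < x \<and> x < z)"

lemma order_iso3: "order_iso [x,y,z] [a,b,c] \<longleftrightarrow>
  (x<y \<longleftrightarrow> a<b) \<and> (x<z \<longleftrightarrow> a<c) \<and> (y<x \<longleftrightarrow> b<a) \<and> (y<z \<longleftrightarrow> b<c) \<and> (z<x \<longleftrightarrow> c<a) \<and> (z<y \<longleftrightarrow> c<b)"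
  unfolding order_iso_def by (auto simp: less_Suc_eq numeral_3_eq_3)

lemma avoid_Pat3: "x \<noteq> y \<Longrightarrow> y \<noteq> z \<Longrightarrow> x \<noteq> (z::nat) \<Longrightarrow>
  (\<forall>\<sigma>\<in>Pat. \<not> order_iso [x,y,z] \<sigma>) \<longleftrightarrow> allowed3 x y z"
  unfolding allowed3_def by (simp add: order_iso3) arith

lemma Av_iff: "p \<in> Av n Pat \<longleftrightarrow> p \<in> perms n \<and> (\<forall>i. i + 2 < n \<longrightarrow> allowed3 (p!i) (p!(i+1)) (p!(i+2)))"
proof (cases "p \<in> perms n")
  case True
  then have len: "length p = n" and d: "distinct p" by (auto simp: perms_length perms_def)
  have "(\<forall>\<sigma>\<in>Pat. \<not> order_iso [p!i, p!(i+1), p!(i+2)] \<sigma>) \<longleftrightarrow> allowed3 (p!i) (p!(i+1)) (p!(i+2))"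
    if "i + 2 < n" for i
    using that d len by (intro avoid_Pat3) (auto simp: nth_eq_iff_index_eq)
  then show ?thesis using True len by (auto simp: Av_def contains_cons_def)
qed (simp add: Av_def)

lemma Av_parity_mono:
  assumes p: "p \<in> Av n Pat"
  shows "i < j \<Longrightarrow> j < n \<Longrightarrow> odd i = odd j \<Longrightarrow> p!i < p!j"
proof (induction j rule: less_induct)
  case (less j)
  have step: "p!k < p!(k+2)" if "k + 2 < n" for k
  proof -
    have "allowed3 (p!k) (p!(k+1)) (p!(k+2))" using p that Av_iff by blast
    then show ?thesis unfolding allowed3_def by linarith
  qed
  have "i + 2 \<le> j" using less.prems by presburger
  define m where "m = j - 2"
  have j: "j = m + 2" and "i \<le> m" using \<open>i + 2 \<le> j\<close> by (simp_all add: m_def)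
  have "p!m < p!j" using step[of m] less.prems(2) j by simp
  show ?case
  proof (cases "m = i")
    case False
    then have "i < m" "m < j" "m < n" "odd i = odd m" using \<open>i \<le> m\<close> j less.prems by auto
    then have "p!i < p!m" using less.IH by blast
    then show ?thesis using \<open>p!m < p!j\<close> by linarith
  qed (use \<open>p!m < p!j\<close> in simp)
qed

text \<open>The letter at position t, placed in slot r, is not between the letters in slots
  r-1 and r+1.  For a False letter with r False letters before it, those neighbours are
  the True letters number r-1 and r, so it must not be preceded by exactly r True
  letters; symmetrically for a True letter.\<close>
definition letter_ok :: "bool list \<Rightarrow> nat \<Rightarrow> bool" where
  "letter_ok w t \<longleftrightarrow>
     (if w!t then pcount w t False \<noteq> pcount w t True + 1 else pcount w t False \<noteq> pcount w t True)"

definition word_ok :: "bool list \<Rightarrow> bool" where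
  "word_ok w \<longleftrightarrow> (\<forall>t<length w. 0 < slot w t \<longrightarrow> slot w t + 1 < length w \<longrightarrow> letter_ok w t)"

lemma letter_ok_snoc: "t < length w \<Longrightarrow> letter_ok (w @ [c]) t = letter_ok w t"
  by (simp add: letter_ok_def pcount_snoc nth_append)

lemma allowed3_iff_letter_ok:
  assumes b: "balanced w" and i: "i + 2 < length w"
  shows "allowed3 (word_perm w ! i) (word_perm w ! (i+1)) (word_perm w ! (i+2))
     \<longleftrightarrow> letter_ok w (inv_into {..<length w} (slot w) (i+1))"
proof -
  let ?n = "length w"
  have bij: "bij_betw (slot w) {..<?n} {..<?n}" using b by (rule slot_bij)
  define s t u where "s = inv_into {..<?n} (slot w) i"
    and "t = inv_into {..<?n} (slot w) (i+1)" and "u = inv_into {..<?n} (slot w) (i+2)"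
  have lt: "s < ?n" "t < ?n" "u < ?n" using perm_of_inv_lt[OF bij] i s_def t_def u_def by auto
  have sl: "slot w s = i" "slot w t = i+1" "slot w u = i+2"
    using perm_of_f_inv[OF bij] i s_def t_def u_def by auto
  have ne: "s \<noteq> t" "t \<noteq> u" using sl by auto
  have "allowed3 (Suc s) (Suc t) (Suc u) \<longleftrightarrow> letter_ok w t"
  proof (cases "even i")
    case True
    then obtain r where r: "i = 2*r" by (auto elim: evenE)
    have A: "\<not> w!s" "pcount w s False = r" using slot_even[of w s r] sl r by auto
    have B: "w!t" "pcount w t True = r" using slot_odd[of w t r] sl r by auto
    have C: "pcount w u False = r+1" using slot_even[of w u "r+1"] sl r by auto
    have "s < u" using pcount_less_iff[of s w u False] lt A C by simp
    moreover have "s < t \<longleftrightarrow> r < pcount w t False" using pcount_less_iff[of s w t False] lt A by simp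
    moreover have "u < t \<longleftrightarrow> r+1 < pcount w t False"
      using pcount_less_iff[of u w t False] lt C slot_even[of w u "r+1"] sl r by simp
    ultimately show ?thesis using ne B unfolding allowed3_def letter_ok_def by auto
  next
    case False
    then obtain r where r: "i = 2*r+1" using oddE by blast
    have A: "w!s" "pcount w s True = r" using slot_odd[of w s r] sl r by auto
    have B: "\<not> w!t" "pcount w t False = r+1" using slot_even[of w t "r+1"] sl r by auto
    have C: "pcount w u True = r+1" using slot_odd[of w u "r+1"] sl r by auto
    have "s < u" using pcount_less_iff[of s w u True] lt A C by simp
    moreover have "s < t \<longleftrightarrow> r < pcount w t True" using pcount_less_iff[of s w t True] lt A by simp
    moreover have "u < t \<longleftrightarrow> r+1 < pcount w t True"
      using pcount_less_iff[of u w t True] lt C slot_odd[of w u "r+1"] sl r by simp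
    ultimately show ?thesis using ne B unfolding allowed3_def letter_ok_def by auto
  qed
  moreover have "word_perm w ! i = Suc s" "word_perm w ! (i+1) = Suc t" "word_perm w ! (i+2) = Suc u"
    using i by (auto simp: word_perm_def perm_of_nth s_def t_def u_def)
  ultimately show ?thesis using t_def by simp
qed

lemma word_perm_Av_iff:
  assumes b: "balanced w"
  shows "word_perm w \<in> Av (length w) Pat \<longleftrightarrow> word_ok w"
proof -
  let ?n = "length w"
  have bij: "bij_betw (slot w) {..<?n} {..<?n}" using b by (rule slot_bij)
  have "(\<forall>i. i + 2 < ?n \<longrightarrow> allowed3 (word_perm w!i) (word_perm w!(i+1)) (word_perm w!(i+2)))
     \<longleftrightarrow> word_ok w"
  proof
    assume allowed: "\<forall>i. i + 2 < ?n \<longrightarrow> allowed3 (word_perm w!i) (word_perm w!(i+1)) (word_perm w!(i+2))"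
    show "word_ok w" unfolding word_ok_def
    proof (intro allI impI)
      fix t assume t: "t < ?n" and "0 < slot w t" and interior: "slot w t + 1 < ?n"
      then obtain i where i: "slot w t = i + 1" by (cases "slot w t") auto
      then have "inv_into {..<?n} (slot w) (i+1) = t"
        using bij t by (metis bij_betw_def inv_into_f_f lessThan_iff)
      then show "letter_ok w t" using allowed allowed3_iff_letter_ok[OF b, of i] i interior by auto
    qed
  next
    assume ok: "word_ok w"
    show "\<forall>i. i + 2 < ?n \<longrightarrow> allowed3 (word_perm w!i) (word_perm w!(i+1)) (word_perm w!(i+2))"
    proof (intro allI impI)
      fix i assume i: "i + 2 < ?n"
      define t where "t = inv_into {..<?n} (slot w) (i+1)"
      have "t < ?n" "slot w t = i+1"
        using perm_of_inv_lt[OF bij] perm_of_f_inv[OF bij] i t_def by auto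
      then have "letter_ok w t" using ok i unfolding word_ok_def by auto
      then show "allowed3 (word_perm w!i) (word_perm w!(i+1)) (word_perm w!(i+2))"
        using allowed3_iff_letter_ok[OF b i] t_def by simp
    qed
  qed
  then show ?thesis
    using Av_iff perm_of_perms[OF bij] by (auto simp: word_perm_def)
qed

definition value_pos :: "nat list \<Rightarrow> nat \<Rightarrow> nat" where
  "value_pos p t = inv_into {..<length p} (nth p) (Suc t)"

lemma perms_nth_bij: "p \<in> perms n \<Longrightarrow> bij_betw (nth p) {..<n} {1..n}"
  using bij_betw_nth[of p "{..<n}" "{1..n}"] perms_length[of p n] by (simp add: perms_def)

lemma value_pos:
  assumes p: "p \<in> perms n" and t: "t < n"
  shows "value_pos p t < n \<and> p ! value_pos p t = Suc t"
proof -
  have "Suc t \<in> nth p ` {..<n}" using perms_nth_bij[OF p] t by (auto simp: bij_betw_def)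
  then show ?thesis unfolding value_pos_def perms_length[OF p]
    by (meson f_inv_into_f inv_into_into lessThan_iff)
qed

lemma value_pos_nth:
  assumes p: "p \<in> perms n" and j: "j < n"
  shows "p!j - 1 < n \<and> value_pos p (p!j - 1) = j"
proof -
  have "p!j \<in> {1..n}" using perms_nth_bij[OF p] j by (auto dest: bij_betwE)
  then have "Suc (p!j - 1) = p!j" "p!j - 1 < n" by auto
  moreover have "inv_into {..<n} (nth p) (p!j) = j"
    using perms_nth_bij[OF p] j by (simp add: bij_betw_def inv_into_f_f)
  ultimately show ?thesis unfolding value_pos_def perms_length[OF p] by simp
qed

lemma value_pos_inj:
  assumes p: "p \<in> perms n"
  shows "inj_on (value_pos p) {..<n}"
proof (rule inj_onI)
  fix s t assume s: "s \<in> {..<n}" and t: "t \<in> {..<n}" and eq: "value_pos p s = value_pos p t"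
  have "Suc s = p ! value_pos p s" using value_pos[OF p] s by simp
  also have "\<dots> = p ! value_pos p t" by (simp only: eq)
  also have "\<dots> = Suc t" using value_pos[OF p] t by simp
  finally show "s = t" by simp
qed

definition perm_word :: "nat list \<Rightarrow> bool list" where
  "perm_word p = map (\<lambda>t. odd (value_pos p t)) [0..<length p]"

context
  fixes n :: nat and p :: "nat list"
  assumes avoid: "p \<in> Av n Pat"
begin

lemma avoider_perms: "p \<in> perms n"
  using avoid unfolding Av_def by blast

lemma perm_word_length: "length (perm_word p) = n"
  using perms_length[OF avoider_perms] by (simp add: perm_word_def)

lemma pcount_perm_word:
  "pcount (perm_word p) t c = card {s. s < t \<and> s < n \<and> odd (value_pos p s) = c}"
proof -
  have len: "length p = n" using perms_length[OF avoider_perms] .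
  have "{s. s < t \<and> s < length (perm_word p) \<and> perm_word p ! s = c}
      = {s. s < t \<and> s < n \<and> odd (value_pos p s) = c}"
    by (auto simp: perm_word_def len)
  then show ?thesis by (simp add: pcount_card)
qed

text \<open>Since equal-parity entries increase, the values smaller than p!i at positions of the
  parity of i are exactly those at positions j < i: the rank of value t+1 among its
  letters is half its position.\<close>
lemma perm_word_rank:
  assumes t: "t < n"
  shows "pcount (perm_word p) t (odd (value_pos p t)) = value_pos p t div 2"
proof -
  let ?i = "value_pos p t"
  let ?S = "{s. s < t \<and> s < n \<and> odd (value_pos p s) = odd ?i}"
  have i: "?i < n" "p!?i = Suc t" using value_pos[OF avoider_perms t] by auto
  have "value_pos p ` ?S = {j. j < ?i \<and> odd j = odd ?i}"
  proof
    show "value_pos p ` ?S \<subseteq> {j. j < ?i \<and> odd j = odd ?i}"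
    proof clarify
      fix s assume s: "s < t" "s < n" "odd (value_pos p s) = odd ?i"
      have "value_pos p s < n" "p ! value_pos p s = Suc s" using value_pos[OF avoider_perms s(2)] by auto
      moreover have "\<not> ?i < value_pos p s" using Av_parity_mono[OF avoid, of ?i "value_pos p s"] s calculation i by auto
      ultimately show "value_pos p s < ?i" using s i by (metis linorder_neqE_nat nat.inject less_irrefl)
    qed
  next
    show "{j. j < ?i \<and> odd j = odd ?i} \<subseteq> value_pos p ` ?S"
    proof clarify
      fix j assume j: "j < ?i" "odd j = odd ?i"
      have "p!j < p!?i" using Av_parity_mono[OF avoid j(1) i(1) j(2)] .
      moreover have "p!j - 1 < n" "value_pos p (p!j - 1) = j" using value_pos_nth[OF avoider_perms] j i by auto
      moreover have "p!j \<ge> 1" using perms_nth_bij[OF avoider_perms] j i by (auto dest: bij_betwE)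
      ultimately show "j \<in> value_pos p ` ?S" using j i by (auto intro!: image_eqI[where x="p!j - 1"])
    qed
  qed
  moreover have "inj_on (value_pos p) ?S"
    using value_pos_inj[OF avoider_perms] by (rule inj_on_subset) auto
  ultimately have "card ?S = card {j. j < ?i \<and> odd j = odd ?i}" using card_image by fastforce
  then show ?thesis using pcount_perm_word card_same_parity_below by simp
qed

lemma slot_perm_word: "t < n \<Longrightarrow> slot (perm_word p) t = value_pos p t"
  using perm_word_rank[of t] perms_length[OF avoider_perms]
  by (cases "odd (value_pos p t)") (auto simp: slot_def perm_word_def elim!: oddE evenE)

lemma perm_word_balanced: "balanced (perm_word p)"
proof -
  have "count_list (perm_word p) True = card {s. s < n \<and> odd (value_pos p s)}"
    using pcount_perm_word[of n True] perm_word_length pcount_full by metis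
  also have "\<dots> = card (value_pos p ` {s. s < n \<and> odd (value_pos p s)})"
    using value_pos_inj[OF avoider_perms] by (intro card_image[symmetric]) (rule inj_on_subset, auto)
  also have "value_pos p ` {s. s < n \<and> odd (value_pos p s)} = {j. j < n \<and> odd j}"
  proof
    show "value_pos p ` {s. s < n \<and> odd (value_pos p s)} \<subseteq> {j. j < n \<and> odd j}"
      using value_pos[OF avoider_perms] by auto
    show "{j. j < n \<and> odd j} \<subseteq> value_pos p ` {s. s < n \<and> odd (value_pos p s)}"
    proof clarify
      fix j assume "j < n" "odd j"
      then show "j \<in> value_pos p ` {s. s < n \<and> odd (value_pos p s)}"
        using value_pos_nth[OF avoider_perms, of j] by (auto intro!: image_eqI[where x="p!j - 1"])
    qed
  qed
  finally have "count_list (perm_word p) True = n div 2" using card_parity_below[of n True] by simp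
  then show ?thesis
    using count_True_False[of "perm_word p"] perm_word_length by (simp add: balanced_def) presburger
qed

lemma word_perm_perm_word: "word_perm (perm_word p) = p"
proof (rule nth_equalityI)
  have len: "length p = n" using perms_length[OF avoider_perms] .
  then show "length (word_perm (perm_word p)) = length p"
    by (simp add: word_perm_def perm_word_length)
  fix i assume "i < length (word_perm (perm_word p))"
  then have i: "i < n" by (simp add: word_perm_def perm_word_length)
  have bij: "bij_betw (slot (perm_word p)) {..<n} {..<n}"
    using slot_bij[OF perm_word_balanced] perm_word_length by simp
  define t where "t = inv_into {..<n} (slot (perm_word p)) i"
  have "t < n" "value_pos p t = i"
    using perm_of_inv_lt[OF bij i] perm_of_f_inv[OF bij i] slot_perm_word t_def by auto
  then have "p!i = Suc t" using value_pos[OF avoider_perms] by blast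
  then show "word_perm (perm_word p) ! i = p ! i"
    using i by (simp add: word_perm_def perm_word_length perm_of_nth t_def)
qed

end

definition good_words :: "nat \<Rightarrow> bool list set" where
  "good_words n = {w. length w = n \<and> balanced w \<and> word_ok w}"

lemma good_wordsD:
  "w \<in> good_words n \<Longrightarrow> length w = n \<and> balanced w \<and> (\<forall>t<n. 0 < slot w t \<longrightarrow> slot w t + 1 < n \<longrightarrow> letter_ok w t)"
  by (auto simp: good_words_def word_ok_def)

lemma Av_eq_image_good_words: "Av n Pat = word_perm ` good_words n"
proof
  show "Av n Pat \<subseteq> word_perm ` good_words n"
  proof
    fix p assume p: "p \<in> Av n Pat"
    then have "perm_word p \<in> good_words n"
      using word_perm_Av_iff[OF perm_word_balanced[OF p]]
      by (simp add: good_words_def perm_word_balanced[OF p] perm_word_length[OF p] word_perm_perm_word[OF p])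
    then show "p \<in> word_perm ` good_words n" using word_perm_perm_word[OF p] by force
  qed
qed (use word_perm_Av_iff in \<open>auto simp: good_words_def\<close>)

lemma I_poly_good_words: "I_poly n Pat q = (\<Sum>w\<in>good_words n. q ^ word_inv w)"
proof -
  have inj: "inj_on word_perm (good_words n)"
    by (rule inj_onI) (auto simp: good_words_def intro: word_perm_inj)
  have "I_poly n Pat q = (\<Sum>w\<in>good_words n. q ^ Defs.inv (word_perm w))"
    unfolding I_poly_def Av_eq_image_good_words by (rule sum.reindex[OF inj, unfolded comp_def])
  also have "\<dots> = (\<Sum>w\<in>good_words n. q ^ word_inv w)"
    by (rule sum.cong) (auto simp: good_words_def inv_word_perm)
  finally show ?thesis .
qed

lemma word_inv_Nil [simp]: "word_inv [] = 0"
  by (simp add: word_inv_def)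

lemma word_inv_snoc:
  "word_inv (w @ [c]) = word_inv w + card {s. s < length w \<and> slot (w @ [c]) (length w) < slot w s}"
  (is "_ = _ + card ?N")
proof -
  let ?S = "\<lambda>v. {(s,t). s < t \<and> t < length v \<and> slot v t < slot v s}"
  have "?S (w @ [c]) = ?S w \<union> (\<lambda>s. (s, length w)) ` ?N"
  proof
    show "?S (w @ [c]) \<subseteq> ?S w \<union> (\<lambda>s. (s, length w)) ` ?N"
    proof
      fix x assume "x \<in> ?S (w @ [c])"
      then obtain s t where x: "x = (s,t)" "s < t" "t < Suc (length w)"
        "slot (w @ [c]) t < slot (w @ [c]) s" by auto
      show "x \<in> ?S w \<union> (\<lambda>s. (s, length w)) ` ?N"
      proof (cases "t = length w")
        case True then show ?thesis using x slot_snoc[of s w c] by auto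
      next
        case False then show ?thesis using x slot_snoc[of s w c] slot_snoc[of t w c] by auto
      qed
    qed
  qed (use slot_snoc in auto)
  moreover have "finite (?S w)"
    by (rule finite_subset[of _ "{..<length w} \<times> {..<length w}"]) auto
  moreover have "finite ?N" "?S w \<inter> (\<lambda>s. (s, length w)) ` ?N = {}" by auto
  moreover have "card ((\<lambda>s. (s, length w)) ` ?N) = card ?N"
    by (rule card_image) (auto simp: inj_on_def)
  ultimately show ?thesis unfolding word_inv_def by (simp add: card_Un_disjoint)
qed

lemma pcount_ge: "card {s. s < length w \<and> w!s = c \<and> m \<le> pcount w s c} = count_list w c - m"
proof (induction w rule: rev_induct)
  case (snoc d w)
  let ?A = "{s. s < length w \<and> w!s = c \<and> m \<le> pcount w s c}"
  have "{s. s < length (w @ [d]) \<and> (w @ [d])!s = c \<and> m \<le> pcount (w @ [d]) s c}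
      = (if d = c \<and> m \<le> count_list w c then insert (length w) ?A else ?A)"
  proof (rule set_eqI)
    fix s
    show "s \<in> {s. s < length (w @ [d]) \<and> (w @ [d])!s = c \<and> m \<le> pcount (w @ [d]) s c}
      \<longleftrightarrow> s \<in> (if d = c \<and> m \<le> count_list w c then insert (length w) ?A else ?A)"
      by (cases "s < length w"; cases "s = length w") (auto simp: nth_append pcount_snoc)
  qed
  moreover have "finite ?A" "length w \<notin> ?A" by auto
  ultimately show ?case
    using snoc.IH by (cases "d = c"; cases "m \<le> count_list w c") (simp_all add: Suc_diff_le)
qed (simp add: pcount_def)

text \<open>An appended letter False sits in slot 2a (a the number of earlier False letters) and
  is inverted with the True letters of rank at least a; dually for True.\<close>
lemma word_inv_snoc_F:
  "word_inv (w @ [False]) = word_inv w + (count_list w True - count_list w False)"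
proof -
  have slot_new: "slot (w @ [False]) (length w) = 2 * count_list w False"
    by (simp add: slot_snoc_last)
  have "{s. s < length w \<and> 2 * count_list w False < slot w s}
      = {s. s < length w \<and> w!s = True \<and> count_list w False \<le> pcount w s True}"
  proof (rule Collect_cong)
    fix s
    show "(s < length w \<and> 2 * count_list w False < slot w s)
      \<longleftrightarrow> (s < length w \<and> w!s = True \<and> count_list w False \<le> pcount w s True)"
      using pcount_lt_total[of s w False] by (cases "w!s") (auto simp: slot_def)
  qed
  then show ?thesis using word_inv_snoc[of w False] pcount_ge[of w True] slot_new by simp
qed

lemma word_inv_snoc_T:
  "word_inv (w @ [True]) = word_inv w + (count_list w False - (count_list w True + 1))"
proof -
  have slot_new: "slot (w @ [True]) (length w) = 2 * count_list w True + 1"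
    by (simp add: slot_snoc_last)
  have "{s. s < length w \<and> 2 * count_list w True + 1 < slot w s}
      = {s. s < length w \<and> w!s = False \<and> count_list w True + 1 \<le> pcount w s False}"
  proof (rule Collect_cong)
    fix s
    show "(s < length w \<and> 2 * count_list w True + 1 < slot w s)
      \<longleftrightarrow> (s < length w \<and> w!s = False \<and> count_list w True + 1 \<le> pcount w s False)"
      using pcount_lt_total[of s w True] by (cases "w!s") (auto simp: slot_def)
  qed
  then show ?thesis using word_inv_snoc[of w True] pcount_ge[of w False] slot_new by simp
qed

text \<open>The cells counted by area, written with prefix counts: the east step at position m
  runs along column pcount P m False at height pcount P m True.\<close>
definition area_cells :: "bool list \<Rightarrow> (nat \<times> nat) set" where
  "area_cells P = {(i, j). j \<ge> i + 1 \<and>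
     (\<exists>m<length P. P ! m = False \<and> pcount P m False = i \<and> j < pcount P m True)}"

lemma area_eq_card: "area P = card (area_cells P)"
  unfolding area_def area_cells_def by (simp add: endpt_def pcount_def)

lemma finite_area_cells: "finite (area_cells P)"
proof (rule finite_subset)
  show "area_cells P \<subseteq> {..length P} \<times> {..length P}"
  proof
    fix x assume "x \<in> area_cells P"
    then obtain i j m where x: "x = (i,j)" "pcount P m False = i" "j < pcount P m True"
      by (auto simp: area_cells_def)
    moreover have "pcount P m False \<le> length P" "pcount P m True \<le> length P"
      by (rule le_trans[OF pcount_le_total count_le_length])+
    ultimately show "x \<in> {..length P} \<times> {..length P}" by auto
  qed
qed simp

lemma area_cells_snoc:
  "area_cells (P @ [c]) = area_cells P \<union>
     (if c then {} else Pair (count_list P False) ` {count_list P False + 1..<count_list P True})"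
  (is "_ = _ \<union> ?N")
proof
  show "area_cells (P @ [c]) \<subseteq> area_cells P \<union> ?N"
  proof
    fix x assume "x \<in> area_cells (P @ [c])"
    then obtain i j m where x: "x = (i,j)" "j \<ge> i+1" "m < Suc (length P)" "(P@[c])!m = False"
        "pcount (P@[c]) m False = i" "j < pcount (P@[c]) m True" by (auto simp: area_cells_def)
    show "x \<in> area_cells P \<union> ?N"
    proof (cases "m = length P")
      case True then show ?thesis using x by (auto simp: pcount_snoc)
    next
      case False
      then have "m < length P" using x by simp
      then show ?thesis using x by (auto simp: area_cells_def pcount_snoc nth_append)
    qed
  qed
next
  show "area_cells P \<union> ?N \<subseteq> area_cells (P @ [c])"
  proof
    fix x assume "x \<in> area_cells P \<union> ?N"
    then show "x \<in> area_cells (P @ [c])"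
    proof
      assume "x \<in> area_cells P"
      then obtain i j m where x: "x = (i,j)" "j \<ge> i+1" "m < length P" "P!m = False"
        "pcount P m False = i" "j < pcount P m True" by (auto simp: area_cells_def)
      then show ?thesis
        by (auto simp: area_cells_def pcount_snoc nth_append intro!: exI[where x=m])
    next
      assume "x \<in> ?N"
      then obtain j where "\<not> c" "x = (count_list P False, j)"
        "count_list P False + 1 \<le> j" "j < count_list P True" by (auto split: if_splits)
      then show ?thesis
        by (auto simp: area_cells_def pcount_snoc intro!: exI[where x="length P"])
    qed
  qed
qed

lemma area_Nil [simp]: "area [] = 0"
  by (simp add: area_eq_card area_cells_def)

lemma area_snoc:
  "area (P @ [c]) = area P + (if c then 0 else count_list P True - (count_list P False + 1))"
proof -
  let ?a = "count_list P False" and ?b = "count_list P True"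
  have disj: "area_cells P \<inter> Pair ?a ` {?a+1..<?b} = {}"
    using pcount_lt_total[of _ P False] by (fastforce simp: area_cells_def)
  have "card (Pair ?a ` {?a+1..<?b}) = ?b - (?a + 1)"
    by (simp add: card_image inj_on_def)
  then show ?thesis
    using disj finite_area_cells[of P]
    by (simp add: area_eq_card area_cells_snoc card_Un_disjoint)
qed

definition ballot :: "bool list \<Rightarrow> bool" where
  "ballot P \<longleftrightarrow> (\<forall>m \<le> length P. pcount P m False \<le> pcount P m True)"

lemma ballot_at: "ballot P \<Longrightarrow> m \<le> length P \<Longrightarrow> pcount P m False \<le> pcount P m True"
  unfolding ballot_def by blast

lemma ballot_total: "ballot P \<Longrightarrow> count_list P False \<le> count_list P True"
  using ballot_at[of P "length P"] by simp

lemma ballot_snoc: "ballot (P @ [c]) \<Longrightarrow> ballot P"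
  unfolding ballot_def by (metis le_SucI length_append_singleton pcount_snoc)

lemma dyck_iff:
  "dyck k P \<longleftrightarrow> length P = 2*k \<and> count_list P False = k \<and> count_list P True = k \<and> ballot P"
  unfolding dyck_def ballot_def by (auto simp: endpt_def pcount_def)

lemma word_inv_ballot: "ballot P \<Longrightarrow> word_inv P = area P + count_list P False"
proof (induction P rule: rev_induct)
  case (snoc c P)
  have bP: "ballot P" using ballot_snoc[OF snoc.prems] .
  have le: "count_list (P@[c]) False \<le> count_list (P@[c]) True" using ballot_total[OF snoc.prems] .
  show ?case
  proof (cases c)
    case True
    have "count_list P False \<le> count_list P True" using ballot_total[OF bP] .
    then show ?thesis using snoc.IH[OF bP] True by (simp add: word_inv_snoc_T area_snoc)
  next
    case False
    have "count_list P False + 1 \<le> count_list P True" using le False by simp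
    then show ?thesis using snoc.IH[OF bP] False by (simp add: word_inv_snoc_F area_snoc)
  qed
qed simp

text \<open>A path reflected in the diagonal, preceded by an east step.\<close>
abbreviation mirror :: "bool list \<Rightarrow> bool list" where
  "mirror P \<equiv> False # map Not P"

lemma map_Not_Not: "map Not (map Not x) = x"
  by (induction x) auto

lemma inj_mirror: "inj mirror"
  by (rule injI) (metis list.inject map_Not_Not)

lemma word_inv_mirror: "ballot P \<Longrightarrow> word_inv (mirror P) = area P + count_list P False"
proof (induction P rule: rev_induct)
  case Nil then show ?case using word_inv_snoc_F[of "[]"] by simp
next
  case (snoc c P)
  have bP: "ballot P" using ballot_snoc[OF snoc.prems] .
  have le: "count_list (P@[c]) False \<le> count_list (P@[c]) True" using ballot_total[OF snoc.prems] .
  have split: "mirror (P@[c]) = mirror P @ [\<not> c]" by simp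
  show ?case
  proof (cases c)
    case True
    have "count_list P False \<le> count_list P True" using ballot_total[OF bP] .
    then have "word_inv (mirror P @ [False]) = word_inv (mirror P)"
      using word_inv_snoc_F[of "mirror P"] by (simp add: count_map_Not)
    then show ?thesis unfolding split using snoc.IH[OF bP] True by (simp add: area_snoc)
  next
    case False
    have "count_list P False + 1 \<le> count_list P True" using le False by simp
    then have "word_inv (mirror P @ [True]) = word_inv (mirror P) + (count_list P True - count_list P False)"
      using word_inv_snoc_T[of "mirror P"] by (simp add: count_map_Not)
    then show ?thesis unfolding split using snoc.IH[OF bP] False \<open>count_list P False + 1 \<le> count_list P True\<close>
      by (simp add: area_snoc)
  qed
qed

lemma letter_ok_ballot: "ballot P \<Longrightarrow> t < length P \<Longrightarrow> letter_ok P t"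
proof -
  assume b: "ballot P" and t: "t < length P"
  have a0: "pcount P t False \<le> pcount P t True" using ballot_at[OF b] t by simp
  have a1: "pcount P (Suc t) False \<le> pcount P (Suc t) True" using ballot_at[OF b] t by simp
  show ?thesis
  proof (cases "P!t")
    case True then show ?thesis using a0 by (simp add: letter_ok_def)
  next
    case False then show ?thesis using a1 t by (simp add: letter_ok_def pcount_Suc)
  qed
qed

lemma letter_ok_mirror: "ballot P \<Longrightarrow> t < length P \<Longrightarrow> letter_ok (mirror P) (Suc t)"
proof -
  assume b: "ballot P" and t: "t < length P"
  have a0: "pcount P t False \<le> pcount P t True" using ballot_at[OF b] t by simp
  have a1: "pcount P (Suc t) False \<le> pcount P (Suc t) True" using ballot_at[OF b] t by simp
  show ?thesis
  proof (cases "P!t")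
    case True then show ?thesis using a0 t by (simp add: letter_ok_def pcount_Cons_Suc pcount_map_Not)
  next
    case False
    have a1': "pcount P t False + 1 \<le> pcount P t True" using a1 False t by (simp add: pcount_Suc)
    then show ?thesis using False t by (simp add: letter_ok_def pcount_Cons_Suc pcount_map_Not)
  qed
qed

lemma dyck_good_even: "dyck k P \<Longrightarrow> P \<in> good_words (2*k)"
  using dyck_iff[of k P] letter_ok_ballot[of P] by (auto simp: good_words_def balanced_def word_ok_def)

lemma dyck_snoc_good_odd: "dyck k P \<Longrightarrow> P @ [False] \<in> good_words (2*k+1)"
proof -
  assume d: "dyck k P"
  note p = dyck_iff[THEN iffD1, OF d]
  have "word_ok (P @ [False])" unfolding word_ok_def
  proof (intro allI impI)
    fix t assume t: "t < length (P@[False])" and "0 < slot (P@[False]) t" and l: "slot (P@[False]) t + 1 < length (P@[False])"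
    show "letter_ok (P@[False]) t"
    proof (cases "t < length P")
      case True then show ?thesis using letter_ok_snoc letter_ok_ballot p by auto
    next
      case False
      then have "t = length P" using t by simp
      moreover have "slot (P@[False]) (length P) = 2 * count_list P False" by (simp add: slot_snoc_last)
      ultimately have "slot (P@[False]) t = 2*k" using p by simp
      then show ?thesis using l p by simp
    qed
  qed
  then show ?thesis using p by (auto simp: good_words_def balanced_def)
qed

lemma mirror_dyck_good_odd: "dyck k P \<Longrightarrow> mirror P \<in> good_words (2*k+1)"
proof -
  assume d: "dyck k P"
  note p = dyck_iff[THEN iffD1, OF d]
  have "word_ok (mirror P)" unfolding word_ok_def
  proof (intro allI impI)
    fix t assume t: "t < length (mirror P)" and pos: "0 < slot (mirror P) t"
    show "letter_ok (mirror P) t"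
    proof (cases t)
      case 0 then show ?thesis using pos by (simp add: slot_def)
    next
      case (Suc t') then show ?thesis using letter_ok_mirror[of P t'] p t by simp
    qed
  qed
  then show ?thesis using p by (auto simp: good_words_def balanced_def count_map_Not)
qed

lemma mirror_dyck_good_even: "k \<ge> 1 \<Longrightarrow> dyck (k-1) P \<Longrightarrow> (mirror P) @ [True] \<in> good_words (2*k)"
proof -
  assume k: "k \<ge> 1" and d: "dyck (k-1) P"
  note p = dyck_iff[THEN iffD1, OF d]
  let ?u = "mirror P"
  have "word_ok (?u @ [True])" unfolding word_ok_def
  proof (intro allI impI)
    fix t assume t: "t < length (?u@[True])" and pos: "0 < slot (?u@[True]) t" and l: "slot (?u@[True]) t + 1 < length (?u@[True])"
    show "letter_ok (?u@[True]) t"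
    proof (cases "t < length ?u")
      case True
      then have e: "letter_ok (?u@[True]) t = letter_ok ?u t" by (rule letter_ok_snoc)
      show ?thesis
      proof (cases t)
        case 0 then show ?thesis using pos True by (simp add: slot_def nth_append)
      next
        case (Suc t') then show ?thesis using letter_ok_mirror[of P t'] p True e by simp
      qed
    next
      case False
      then have "t = length ?u" using t by simp
      moreover have "slot (?u@[True]) (length ?u) = 2 * count_list ?u True + 1" by (simp only: slot_snoc_last if_True)
      ultimately have "slot (?u@[True]) t = 2*(k-1) + 1" using p by (simp add: count_map_Not)
      then show ?thesis using l p k by simp
    qed
  qed
  then show ?thesis using p k by (auto simp: good_words_def balanced_def count_map_Not)
qed


text \<open>A good word starting with a north step stays weakly above the diagonal: an east
  step bringing it back to the diagonal would be a False letter in an interior slot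
  preceded by equally many True letters.\<close>
lemma ballot_of_good_word:
  assumes w: "w \<in> good_words n" and w0: "w!0"
  shows "m \<le> n \<Longrightarrow> even n \<or> m < n \<Longrightarrow> pcount w m False \<le> pcount w m True"
proof (induction m)
  case 0 then show ?case by simp
next
  case (Suc m)
  note f = good_wordsD[OF w]
  have IH: "pcount w m False \<le> pcount w m True" using Suc by simp
  have mn: "m < length w" using Suc.prems f by simp
  show ?case
  proof (cases "w!m")
    case True then show ?thesis using IH mn by (simp add: pcount_Suc)
  next
    case False
    have "pcount w m False < pcount w m True"
    proof (rule ccontr)
      assume "\<not> pcount w m False < pcount w m True"
      then have eq: "pcount w m False = pcount w m True" using IH by simp
      have sm: "pcount w m True + pcount w m False = m" using pcount_True_False[of w m] mn by simp
      have m0: "m \<noteq> 0" using w0 False by (cases m) auto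
      have ps: "slot w m = 2 * pcount w m False" using False by (simp add: slot_def)
      have "0 < slot w m" using ps eq sm m0 by simp
      moreover have "slot w m + 1 < n" using ps eq sm Suc.prems by presburger
      ultimately have "letter_ok w m" using f mn by auto
      then show False using eq False by (simp add: letter_ok_def)
    qed
    then show ?thesis using False mn by (simp add: pcount_Suc)
  qed
qed

lemma good_word_mirror_ballot:
  assumes w: "w \<in> good_words n" and w0: "\<not> w!0"
  shows "1 \<le> m \<Longrightarrow> m \<le> n \<Longrightarrow> odd n \<or> m < n \<Longrightarrow> pcount w m True + 1 \<le> pcount w m False"
proof (induction m)
  case 0 then show ?case by simp
next
  case (Suc m)
  note f = good_wordsD[OF w]
  have mn: "m < length w" using Suc.prems f by simp
  show ?case
  proof (cases "m = 0")
    case True then show ?thesis using w0 mn by (simp add: pcount_Suc)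
  next
    case m0: False
    have IH: "pcount w m True + 1 \<le> pcount w m False" using Suc m0 by simp
    show ?thesis
    proof (cases "w!m")
      case False then show ?thesis using IH mn by (simp add: pcount_Suc)
    next
      case True
      have "pcount w m True + 1 < pcount w m False"
      proof (rule ccontr)
        assume "\<not> pcount w m True + 1 < pcount w m False"
        then have eq: "pcount w m False = pcount w m True + 1" using IH by simp
        have sm: "pcount w m True + pcount w m False = m" using pcount_True_False[of w m] mn by simp
        have ps: "slot w m = 2 * pcount w m True + 1" using True by (simp add: slot_def)
        have "slot w m + 1 < n" using ps eq sm Suc.prems by presburger
        then have "letter_ok w m" using f mn ps by auto
        then show False using eq True by (simp add: letter_ok_def)
      qed
      then show ?thesis using True mn by (simp add: pcount_Suc)
    qed
  qed
qed

lemma good_word_counts_even: "w \<in> good_words (2*k) \<Longrightarrow> count_list w False = k \<and> count_list w True = k"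
  using good_wordsD[of w "2*k"] count_True_False[of w] by (auto simp: balanced_def)

lemma good_word_counts_odd: "w \<in> good_words (2*k+1) \<Longrightarrow> count_list w False = k+1 \<and> count_list w True = k"
  using good_wordsD[of w "2*k+1"] count_True_False[of w] by (auto simp: balanced_def)

lemma ballot_unmirror:
  assumes below: "\<And>m. 1 \<le> m \<Longrightarrow> m \<le> Suc (length v) \<Longrightarrow>
                     pcount (False # v) m True + 1 \<le> pcount (False # v) m False"
  shows "ballot (map Not v)"
  unfolding ballot_def
proof (intro allI impI)
  fix m assume "m \<le> length (map Not v)"
  then have "pcount (False # v) (Suc m) True + 1 \<le> pcount (False # v) (Suc m) False"
    using below[of "Suc m"] by simp
  then show "pcount (map Not v) m False \<le> pcount (map Not v) m True"
    by (simp add: pcount_Cons_Suc pcount_map_Not)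
qed

lemma good_word_even_cases:
  assumes k: "k \<ge> 1" and w: "w \<in> good_words (2*k)"
  shows "dyck k w \<or> (\<exists>P. dyck (k-1) P \<and> w = mirror P @ [True])"
proof -
  note f = good_wordsD[OF w]
  note c = good_word_counts_even[OF w]
  have ne: "w \<noteq> []" using f k by auto
  show ?thesis
  proof (cases "w!0")
    case True
    have "ballot w" unfolding ballot_def using ballot_of_good_word[OF w True] f by auto
    then show ?thesis using f c by (simp add: dyck_iff)
  next
    case False
    obtain v where wv: "w = False # v" using ne False by (cases w) auto
    have "v \<noteq> []" using f k wv by auto
    then obtain v' x where vx: "v = v' @ [x]" by (cases v rule: rev_exhaust) auto
    have lv': "Suc (Suc (length v')) = 2*k" using f wv vx by simp
    have below: "pcount w m True + 1 \<le> pcount w m False" if "1 \<le> m" "m \<le> Suc (length v')" for m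
      using good_word_mirror_ballot[OF w False] that lv' by simp
    have prefix: "pcount w m c = pcount (False # v') m c" if "m \<le> Suc (length v')" for m c
      using that unfolding wv vx by (cases m) (simp_all add: pcount_Cons_Suc pcount_snoc)
    have "ballot (map Not v')"
      using below prefix by (intro ballot_unmirror) simp
    moreover have x: "x"
      using below[of "Suc (length v')"] prefix[of "Suc (length v')"] c
      unfolding wv vx by (cases x) (auto simp: pcount_Cons_Suc)
    ultimately have "dyck (k-1) (map Not v')"
      using c lv' unfolding wv vx dyck_iff by (auto simp: count_map_Not)
    moreover have "w = mirror (map Not v') @ [True]" using wv vx x by (simp add: comp_def)
    ultimately show ?thesis by blast
  qed
qed

lemma good_word_odd_cases:
  assumes k: "k \<ge> 1" and w: "w \<in> good_words (2*k+1)"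
  shows "(\<exists>P. dyck k P \<and> w = P @ [False]) \<or> (\<exists>P. dyck k P \<and> w = mirror P)"
proof -
  note f = good_wordsD[OF w]
  note c = good_word_counts_odd[OF w]
  have ne: "w \<noteq> []" using f k by auto
  show ?thesis
  proof (cases "w!0")
    case True
    obtain v x where vx: "w = v @ [x]" using ne by (cases w rule: rev_exhaust) auto
    have lv: "length v = 2*k" using f vx by simp
    have above: "pcount v m False \<le> pcount v m True" if "m \<le> length v" for m
      using ballot_of_good_word[OF w True, of m] that lv unfolding vx by (simp add: pcount_snoc)
    then have "ballot v" by (simp add: ballot_def)
    moreover have "\<not> x" using above[of "length v"] c unfolding vx by (cases x) auto
    ultimately have "dyck k v" using lv c unfolding vx dyck_iff by auto
    then show ?thesis using vx \<open>\<not> x\<close> by blast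
  next
    case False
    obtain v where wv: "w = False # v" using ne False by (cases w) auto
    have "ballot (map Not v)"
      using good_word_mirror_ballot[OF w False] f unfolding wv by (intro ballot_unmirror) auto
    then have "dyck k (map Not v)"
      using f c unfolding wv dyck_iff by (auto simp: count_map_Not)
    moreover have "w = mirror (map Not v)" using wv by (simp add: comp_def)
    ultimately show ?thesis by blast
  qed
qed

lemma dyck_hd: "k \<ge> 1 \<Longrightarrow> dyck k P \<Longrightarrow> P \<noteq> [] \<and> P!0"
proof -
  assume k: "k \<ge> 1" and d: "dyck k P"
  note p = dyck_iff[THEN iffD1, OF d]
  have ne: "P \<noteq> []" using p k by auto
  have "pcount P 1 False \<le> pcount P 1 True" using ballot_at[of P 1] p ne k by (simp add: Suc_leI)
  then have "P!0" using ne by (simp add: pcount_Suc split: if_splits)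
  then show ?thesis using ne by simp
qed

lemma finite_dyck: "finite {P. dyck k P}"
proof (rule finite_subset)
  show "{P. dyck k P} \<subseteq> {xs. set xs \<subseteq> (UNIV :: bool set) \<and> length xs = 2*k}"
    by (auto simp: dyck_def)
qed (rule finite_lists_length_eq, simp)

lemma sum_dyck_image:
  fixes q :: "'a::comm_ring_1"
  assumes inj: "inj_on f {P. dyck k P}"
    and inv: "\<And>P. dyck k P \<Longrightarrow> word_inv (f P) = area P + j"
  shows "(\<Sum>w\<in>f ` {P. dyck k P}. q ^ word_inv w) = q ^ j * Cq k q"
proof -
  have "(\<Sum>w\<in>f ` {P. dyck k P}. q ^ word_inv w) = (\<Sum>P\<in>{P. dyck k P}. q ^ (area P + j))"
    by (subst sum.reindex[OF inj]) (auto intro!: sum.cong simp: inv)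
  also have "\<dots> = q ^ j * Cq k q"
    unfolding Cq_def by (simp add: power_add sum_distrib_left mult.commute)
  finally show ?thesis .
qed

lemma I_poly_odd:
  fixes q :: "'a::comm_ring_1"
  assumes k: "k \<ge> 1"
  shows "I_poly (2*k+1) Pat q = 2 * q ^ k * Cq k q"
proof -
  let ?D = "{P. dyck k P}"
  have split: "good_words (2*k+1) = (\<lambda>P. P @ [False]) ` ?D \<union> mirror ` ?D"
    using good_word_odd_cases[OF k] dyck_snoc_good_odd mirror_dyck_good_odd by blast
  have disj: "(\<lambda>P. P @ [False]) ` ?D \<inter> mirror ` ?D = {}"
  proof (rule ccontr)
    assume "(\<lambda>P. P @ [False]) ` ?D \<inter> mirror ` ?D \<noteq> {}"
    then obtain P P' where "dyck k P" "P @ [False] = mirror P'" by blast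
    then show False using dyck_hd[OF k, of P] by (cases P) auto
  qed
  have snoc_inv: "word_inv (P @ [False]) = area P + k" if "dyck k P" for P
    using that dyck_iff[of k P] word_inv_snoc_F[of P] word_inv_ballot[of P] by simp
  have mirror_inv: "word_inv (mirror P) = area P + k" if "dyck k P" for P
    using that dyck_iff[of k P] word_inv_mirror[of P] by simp
  have "I_poly (2*k+1) Pat q
      = (\<Sum>w\<in>(\<lambda>P. P @ [False]) ` ?D. q ^ word_inv w) + (\<Sum>w\<in>mirror ` ?D. q ^ word_inv w)"
    unfolding I_poly_good_words split using disj finite_dyck by (intro sum.union_disjoint) auto
  also have "(\<Sum>w\<in>(\<lambda>P. P @ [False]) ` ?D. q ^ word_inv w) = q ^ k * Cq k q"
    by (rule sum_dyck_image[OF _ snoc_inv]) (auto simp: inj_on_def)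
  also have "(\<Sum>w\<in>mirror ` ?D. q ^ word_inv w) = q ^ k * Cq k q"
    by (rule sum_dyck_image[OF inj_on_subset[OF inj_mirror] mirror_inv]) auto
  finally show ?thesis by (simp only: mult_2 distrib_right)
qed

lemma I_poly_even:
  fixes q :: "'a::comm_ring_1"
  assumes k: "k \<ge> 1"
  shows "I_poly (2*k) Pat q = q ^ (k-1) * Cq (k-1) q + q ^ k * Cq k q"
proof -
  let ?D = "\<lambda>k. {P. dyck k P}"
  let ?E = "\<lambda>P. mirror P @ [True]"
  have split: "good_words (2*k) = ?E ` ?D (k-1) \<union> ?D k"
    using good_word_even_cases[OF k] dyck_good_even mirror_dyck_good_even[OF k] by blast
  have disj: "?E ` ?D (k-1) \<inter> ?D k = {}"
  proof (rule ccontr)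
    assume "?E ` ?D (k-1) \<inter> ?D k \<noteq> {}"
    then obtain P where "dyck k (?E P)" by blast
    then show False using dyck_hd[OF k, of "?E P"] by simp
  qed
  have "I_poly (2*k) Pat q = (\<Sum>w\<in>?E ` ?D (k-1). q ^ word_inv w) + (\<Sum>w\<in>?D k. q ^ word_inv w)"
    unfolding I_poly_good_words split using disj finite_dyck by (intro sum.union_disjoint) auto
  also have "(\<Sum>w\<in>?E ` ?D (k-1). q ^ word_inv w) = q ^ (k-1) * Cq (k-1) q"
  proof (rule sum_dyck_image)
    show "inj_on ?E (?D (k-1))" by (rule inj_onI) (metis append1_eq_conv injD inj_mirror)
    show "word_inv (?E P) = area P + (k-1)" if "dyck (k-1) P" for P
      using that dyck_iff[of "k-1" P] word_inv_mirror[of P] word_inv_snoc_T[of "mirror P"] k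
      by (simp add: count_map_Not)
  qed
  also have "(\<Sum>w\<in>?D k. q ^ word_inv w) = q ^ k * Cq k q"
    using sum_dyck_image[of id k k q] dyck_iff word_inv_ballot by simp
  finally show ?thesis .
qed

theorem mainTheorem7:
  fixes q :: "'a::comm_ring_1" and k :: nat
  assumes "k \<ge> 1"
  shows "I_poly (2*k+1) {[3,2,1],[3,1,2],[1,2,3],[2,3,1]} q = 2 * q ^ k * Cq k q
       \<and> I_poly (2*k) {[3,2,1],[3,1,2],[1,2,3],[2,3,1]} q
           = q ^ (k-1) * Cq (k-1) q + q ^ k * Cq k q"
  using I_poly_odd[OF assms] I_poly_even[OF assms] by blast

end
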